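(* Let $p$ be a prime, let $M$ be an elementary abelian $p$-group (written multiplicatively), and let $1\to \mathbb{Z}/p\to \hat M\to M\to 1$ be a Frattini extension of groups with kernel of order $p$ (so $\hat M$ is a $p$-group and the kernel is central). For $m\in M$ let $\hat m$ denote a lift of $m$ to $\hat M$. Let $V^0$ be the set of nonidentity $m\in M$ whose lifts to $\hat M$ have order $p$, and $V=V^0\cup\{1\}$. Let $m_1,m_2\in M$ with $\langle m_1,m_2\rangle$ of rank $2$, and let $\langle \hat m_1,\hat m_2\rangle$ be the subgroup of $\hat M$ generated by lifts of them. (i) If $m_1,m_2\in V$: when $p=2$, $\langle\hat m_1,\hat m_2\rangle$ is either a Klein $4$-group or the dihedral group $D_4$ of order $8$; when $p\ne 2$, it is either $(\mathbb{Z}/p)^2$, or $U_p$, or it is $H_p$ and the commutator $(\hat m_1,\hat m_2)$ generates the kernel of $\langle\hat m_1,\hat m_2\rangle\to\langle m_1,m_2\rangle$. (ii) If $m_1,m_2\in M\setminus V$: when $p=2$, $\langle\hat m_1,\hat m_2\rangle$ is either $\mathbb{Z}/4\times\mathbb{Z}/2$ or the quaternion group $Q_8$; when $p\ne 2$, it is either $\mathbb{Z}/p^2\times\mathbb{Z}/p$ or $U_p$. (iii) If $m_1\in V^0$ and $m_2\in M\setminus V$, then $\langle\hat m_1,\hat m_2\rangle$ is either $\mathbb{Z}/p^2\times\mathbb{Z}/p$ or $U_p$.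
   Context: $U_p=\mathbb{Z}/p^2\rtimes\mathbb{Z}/p$, where a generator of $\mathbb{Z}/p$ acts on $\mathbb{Z}/p^2$ by sending $1$ to $1+ap$ for some $a$ prime to $p$. $H_p$ is the Heisenberg group of order $p^3$ (unipotent upper triangular $3\times3$ matrices over $\mathbb{F}_p$). Since the kernel is central, $\hat m^p$ depends only on $m$. *)

theory Defs
  imports "HOL-Algebra.Algebra"
begin

abbreviation Zmod :: "nat \<Rightarrow> int monoid" where
  "Zmod n \<equiv> integer_mod_group n"

text \<open>U_p(a) = Z/p^2 semidirect Z/p, the generator of Z/p acting by 1 maps to 1+ap.\<close>
definition U_grp :: "nat \<Rightarrow> int \<Rightarrow> (int \<times> int) monoid" where
  "U_grp p a = \<lparr>carrier = {0..<int p ^ 2} \<times> {0..<int p},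
     monoid.mult = (\<lambda>(x,i) (y,j). ((x + (1 + a * int p) ^ nat i * y) mod (int p ^ 2), (i + j) mod int p)),
     one = (0,0)\<rparr>"

text \<open>Heisenberg group H_p of unipotent upper triangular 3x3 matrices over F_p:
  the triple (a,b,c) stands for the matrix with entries a (1,2), b (2,3), c (1,3).\<close>
definition Heis_grp :: "nat \<Rightarrow> (int \<times> int \<times> int) monoid" where
  "Heis_grp p = \<lparr>carrier = {0..<int p} \<times> {0..<int p} \<times> {0..<int p},
     monoid.mult = (\<lambda>(a,b,c) (a',b',c'). ((a + a') mod int p, (b + b') mod int p, (c + c' + a * b') mod int p)),
     one = (0,0,0)\<rparr>"

text \<open>Dihedral group of order 8: r^x s^i.\<close>
definition D4_grp :: "(int \<times> int) monoid" where
  "D4_grp = \<lparr>carrier = {0..<4} \<times> {0..<2},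
     monoid.mult = (\<lambda>(x,i) (y,j). ((x + (-1) ^ nat i * y) mod 4, (i + j) mod 2)),
     one = (0,0)\<rparr>"

text \<open>Quaternion group of order 8: i^x j^b with j i = i^-1 j and j^2 = i^2.\<close>
definition Q8_grp :: "(int \<times> int) monoid" where
  "Q8_grp = \<lparr>carrier = {0..<4} \<times> {0..<2},
     monoid.mult = (\<lambda>(x,b) (y,d). ((x + (-1) ^ nat b * y + 2 * b * d) mod 4, (b + d) mod 2)),
     one = (0,0)\<rparr>"

definition frattini_ext :: "('a,'c) monoid_scheme \<Rightarrow> ('b,'d) monoid_scheme \<Rightarrow> ('a \<Rightarrow> 'b) \<Rightarrow> bool" where
  "frattini_ext Mh M phi \<longleftrightarrow>
     (\<forall>H. subgroup H Mh \<and> phi ` H = carrier M \<longrightarrow> H = carrier Mh)"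

definition V0_set :: "nat \<Rightarrow> ('a,'c) monoid_scheme \<Rightarrow> ('b,'d) monoid_scheme \<Rightarrow> ('a \<Rightarrow> 'b) \<Rightarrow> 'b set" where
  "V0_set p Mh M phi = {m \<in> carrier M. m \<noteq> \<one>\<^bsub>M\<^esub> \<and>
      (\<forall>x \<in> carrier Mh. phi x = m \<longrightarrow> group.ord Mh x = p)}"

definition V_set :: "nat \<Rightarrow> ('a,'c) monoid_scheme \<Rightarrow> ('b,'d) monoid_scheme \<Rightarrow> ('a \<Rightarrow> 'b) \<Rightarrow> 'b set" where
  "V_set p Mh M phi = V0_set p Mh M phi \<union> {\<one>\<^bsub>M\<^esub>}"

end

theory Submission
  imports Defs "HOL-Number_Theory.Number_Theory"
begin

text \<open>Every element x of Mhat satisfies x^(p^2) = 1, because x^p lies in the kernel K, which has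
  order p. Conjugation by x acts on the cyclic group K as k \<mapsto> k^s with s^(p^2) = 1 mod p, and
  Fermat's little theorem turns this into s = 1 mod p: K is central.

  Hence for lifts y, z of an independent pair the p-th powers and the commutator lie in the
  central subgroup K, and every element of the subgroup they generate has a normal form
  y^i z^j, resp. y^b z^a c^k with c = [y, z]. Multiplying normal forms gives the group law of one
  of the model groups, and independence of phi y, phi z modulo p, together with the order of y,
  makes the normal form map injective.

  If both lifts have order p this yields (Z/p)^2, or D4 resp. H_p when they do not commute. If y
  has order p^2 and z has order p, then z y z^-1 = y^(1+wp) with w in Z/p, which gives
  Z/p^2 \<times> Z/p or U_p. If both have order p^2, then (x2 x1^s)^p = x2^p x1^(sp) c^(s p (p-1)/2), so
  for suitable s the element x2 x1^s has order p as soon as p is odd or x1, x2 commute; this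
  reduces to the mixed case. In the remaining case p = 2 the kernel has a single nontrivial
  element, so x1^2 = x2^2 = c, which is the presentation of Q8.\<close>

lemma iso_sym_of_closed:
  assumes h: "h \<in> iso A B"
    and closed: "\<And>a b. a \<in> carrier A \<Longrightarrow> b \<in> carrier A \<Longrightarrow> a \<otimes>\<^bsub>A\<^esub> b \<in> carrier A"
  shows "B \<cong> A"
proof -
  let ?g = "inv_into (carrier A) h"
  have bij: "bij_betw h (carrier A) (carrier B)"
    and h_mult: "\<And>a b. a \<in> carrier A \<Longrightarrow> b \<in> carrier A \<Longrightarrow> h (a \<otimes>\<^bsub>A\<^esub> b) = h a \<otimes>\<^bsub>B\<^esub> h b"
    using h by (auto simp: iso_def hom_def)
  have g: "?g x \<in> carrier A" "h (?g x) = x" if "x \<in> carrier B" for x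
    using bij that by (auto simp: bij_betw_def inv_into_into f_inv_into_f)
  have "?g \<in> hom B A"
  proof (rule homI)
    show "?g x \<in> carrier A" if "x \<in> carrier B" for x
      using g that by blast
    show "?g (x \<otimes>\<^bsub>B\<^esub> y) = ?g x \<otimes>\<^bsub>A\<^esub> ?g y" if "x \<in> carrier B" "y \<in> carrier B" for x y
    proof -
      have "?g (x \<otimes>\<^bsub>B\<^esub> y) = ?g (h (?g x \<otimes>\<^bsub>A\<^esub> ?g y))"
        using g that h_mult by simp
      also have "\<dots> = ?g x \<otimes>\<^bsub>A\<^esub> ?g y"
        using bij g that closed by (simp add: bij_betw_inv_into_left)
      finally show ?thesis .
    qed
  qed
  then show ?thesis
    using bij by (auto simp: is_iso_def iso_def bij_betw_inv_into)
qed

lemma int_pow_of_nonneg: "(0::int) \<le> b \<Longrightarrow> g [^]\<^bsub>H\<^esub> nat b = g [^]\<^bsub>H\<^esub> b"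
  using int_pow_int[of H g "nat b"] by simp

lemma int_cong_pow_prime:
  assumes p: "Factorial_Ring.prime (p::nat)"
  shows "[(s::int) ^ p = s] (mod int p)"
proof -
  define a where "a = nat (s mod int p)"
  have p0: "0 < p" using p prime_gt_0_nat by blast
  have as: "[int a = s] (mod int p)" using p0 by (simp add: a_def cong_def)
  show ?thesis
  proof (cases "p dvd a")
    case True
    then have "int p dvd s" using as by (metis cong_dvd_iff int_dvd_int_iff)
    moreover have "s dvd s ^ p" using p0 by simp
    ultimately show ?thesis by (simp add: cong_def dvd_imp_mod_0 dvd_trans)
  next
    case False
    have "[a ^ (p - 1) * a = 1 * a] (mod p)"
      by (rule cong_scalar_right[OF fermat_theorem[OF p False]])
    moreover have "a ^ (p - 1) * a = a ^ p" using p0 by (metis Suc_diff_1 power_Suc2)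
    ultimately have "[int a ^ p = int a] (mod int p)" using cong_int_iff by force
    moreover have "[s ^ p = int a ^ p] (mod int p)" by (rule cong_pow[OF cong_sym[OF as]])
    ultimately show ?thesis using as by (metis cong_trans)
  qed
qed

lemma int_cong_pow_prime_square:
  assumes p: "Factorial_Ring.prime (p::nat)"
  shows "[(s::int) ^ (p * p) = s] (mod int p)"
proof -
  have "[(s ^ p) ^ p = s ^ p] (mod int p)" by (rule int_cong_pow_prime[OF p])
  then show ?thesis using int_cong_pow_prime[OF p] cong_trans by (metis power_mult)
qed

lemma int_mod_eqI:
  fixes x x' q :: int
  assumes "x \<in> {0..<q}" "x' \<in> {0..<q}" "q dvd x - x'"
  shows "x = x'"
  using assms mod_eq_dvd_iff[of x q x'] by simp

context group
begin

lemma int_pow_mod_eq: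
  assumes "y \<in> carrier G" "y [^] (q::int) = \<one>"
  shows "y [^] (w mod q) = y [^] w"
proof -
  have "int (ord y) dvd q" using assms int_pow_eq_id by blast
  moreover have "q dvd w - w mod q" by (simp add: minus_mod_eq_mult_div)
  ultimately show ?thesis using int_pow_eq[OF assms(1)] dvd_trans by metis
qed

lemma nat_pow_mod_eq:
  assumes "y \<in> carrier G" "y [^] (q::int) = \<one>" "0 < q"
  shows "y [^] nat (int n mod q) = y [^] (n::nat)"
  using int_pow_mod_eq[OF assms(1,2), of "int n"] assms(3)
  by (simp add: int_pow_of_nonneg int_pow_int)

lemma nat_pow_commute:
  assumes "x \<otimes> y = y \<otimes> x" "x \<in> carrier G" "y \<in> carrier G"
  shows "x [^] (m::nat) \<otimes> y [^] (n::nat) = y [^] n \<otimes> x [^] m"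
proof -
  have "y \<otimes> x [^] m = x [^] m \<otimes> y" using group_commutes_pow[OF assms] by simp
  then show ?thesis using group_commutes_pow[of y "x [^] m" n] assms by simp
qed

lemma conj_int_pow:
  assumes z: "z \<in> carrier G" and y: "y \<in> carrier G"
  shows "z \<otimes> y [^] (u::int) \<otimes> inv z = (z \<otimes> y \<otimes> inv z) [^] u"
proof -
  have "inv z \<otimes> (z \<otimes> w) = w" if "w \<in> carrier G" for w
    using z that by (simp add: m_assoc[symmetric])
  then have "(\<lambda>g. z \<otimes> g \<otimes> inv z) \<in> hom G G"
    using z by (auto simp: hom_def m_assoc)
  from hom_int_pow[OF this y is_group is_group] show ?thesis by simp
qed

lemma conj_pow_commute:
  assumes z: "z \<in> carrier G" and y: "y \<in> carrier G" and conj: "z \<otimes> y \<otimes> inv z = y [^] (r::int)"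
  shows "z [^] (n::nat) \<otimes> y [^] (u::int) = y [^] (r ^ n * u) \<otimes> z [^] n"
proof (induction n arbitrary: u)
  case 0
  then show ?case using y by simp
next
  case (Suc n)
  have step: "z \<otimes> y [^] w = y [^] (r * w) \<otimes> z" for w :: int
  proof -
    have "z \<otimes> y [^] w \<otimes> inv z = y [^] (r * w)"
      using conj_int_pow[OF z y, of w] conj int_pow_pow[OF y] by simp
    then have "z \<otimes> y [^] w \<otimes> inv z \<otimes> z = y [^] (r * w) \<otimes> z" by simp
    then show ?thesis using z y by (simp add: m_assoc)
  qed
  have "z [^] Suc n \<otimes> y [^] u = z [^] n \<otimes> (y [^] (r * u) \<otimes> z)"
    using z y by (simp add: m_assoc step)
  also have "\<dots> = y [^] (r ^ n * (r * u)) \<otimes> z [^] n \<otimes> z"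
    using z y by (simp add: Suc m_assoc[symmetric])
  finally show ?case
    using z y by (simp add: m_assoc mult.assoc mult.commute mult.left_commute)
qed

lemma central_commutator_pow_right:
  assumes u: "u \<in> carrier G" and v: "v \<in> carrier G" and e: "e \<in> carrier G"
    and vu: "v \<otimes> u = u \<otimes> v \<otimes> e" and eu: "e \<otimes> u = u \<otimes> e"
  shows "v \<otimes> u [^] (n::nat) = u [^] n \<otimes> v \<otimes> e [^] n"
proof (induction n)
  case 0
  then show ?case using u v by simp
next
  case (Suc n)
  have "v \<otimes> u [^] Suc n = (v \<otimes> u [^] n) \<otimes> u"
    using u v by (simp add: m_assoc)
  also have "\<dots> = u [^] n \<otimes> v \<otimes> (e [^] n \<otimes> u)"
    using u v e by (simp add: Suc m_assoc)
  also have "\<dots> = u [^] n \<otimes> (v \<otimes> u) \<otimes> e [^] n"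
    using u v e by (simp add: group_commutes_pow[OF eu e u] m_assoc)
  also have "\<dots> = u [^] n \<otimes> u \<otimes> v \<otimes> (e \<otimes> e [^] n)"
    using u v e by (simp add: vu m_assoc)
  also have "\<dots> = u [^] Suc n \<otimes> v \<otimes> e [^] Suc n"
    using e by (simp add: nat_pow_Suc2[symmetric] del: nat_pow_Suc)
  finally show ?case .
qed

lemma central_commutator_pow:
  assumes u: "u \<in> carrier G" and v: "v \<in> carrier G" and e: "e \<in> carrier G"
    and vu: "v \<otimes> u = u \<otimes> v \<otimes> e" and eu: "e \<otimes> u = u \<otimes> e" and ev: "e \<otimes> v = v \<otimes> e"
  shows "v [^] (m::nat) \<otimes> u [^] (n::nat) = u [^] n \<otimes> v [^] m \<otimes> e [^] (m * n)"
proof (induction m)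
  case 0
  then show ?case using u v by simp
next
  case (Suc m)
  have "v [^] Suc m \<otimes> u [^] n = (v [^] m \<otimes> u [^] n) \<otimes> v \<otimes> e [^] n"
    using u v e by (simp add: central_commutator_pow_right[OF u v e vu eu] nat_pow_Suc2 m_assoc
        del: nat_pow_Suc)
  also have "\<dots> = u [^] n \<otimes> (v [^] m \<otimes> v) \<otimes> (e [^] (m * n) \<otimes> e [^] n)"
    using u v e by (simp add: Suc m_assoc group_commutes_pow[OF ev e v])
  also have "\<dots> = u [^] n \<otimes> v [^] Suc m \<otimes> e [^] (Suc m * n)"
    using u v e by (simp add: nat_pow_mult add.commute m_assoc)
  finally show ?case .
qed

lemma central_commutator_prod_pow:
  assumes a: "a \<in> carrier G" and b: "b \<in> carrier G" and e: "e \<in> carrier G"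
    and ba: "b \<otimes> a = a \<otimes> b \<otimes> e" and ea: "e \<otimes> a = a \<otimes> e" and eb: "e \<otimes> b = b \<otimes> e"
  shows "(a \<otimes> b) [^] (n::nat) = a [^] n \<otimes> b [^] n \<otimes> e [^] (n * (n - 1) div 2)"
proof (induction n)
  case 0
  then show ?case by simp
next
  case (Suc n)
  have bna: "b [^] n \<otimes> a = a \<otimes> b [^] n \<otimes> e [^] n"
    using central_commutator_pow[OF a b e ba ea eb, of n 1] a by simp
  have eb': "e [^] k \<otimes> b = b \<otimes> e [^] k" for k :: nat
    using group_commutes_pow[OF eb e b] .
  have eb'': "e [^] k \<otimes> (b \<otimes> w) = b \<otimes> (e [^] k \<otimes> w)" if "w \<in> carrier G" for k :: nat and w
    using eb' b e that by (metis m_assoc nat_pow_closed)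
  have exp: "n + n * (n - Suc 0) div 2 = (n + n * n) div 2"
    by (cases n) (auto simp: algebra_simps)
  have "(a \<otimes> b) [^] Suc n = a [^] n \<otimes> b [^] n \<otimes> e [^] (n * (n - 1) div 2) \<otimes> a \<otimes> b"
    using a b e by (simp add: Suc m_assoc)
  also have "\<dots> = a [^] n \<otimes> (b [^] n \<otimes> a) \<otimes> (e [^] (n * (n - 1) div 2) \<otimes> b)"
    using a b e by (simp add: group_commutes_pow[OF ea e a] m_assoc)
  also have "\<dots> = a [^] n \<otimes> (a \<otimes> b [^] n \<otimes> e [^] n) \<otimes> (b \<otimes> e [^] (n * (n - 1) div 2))"
    by (simp add: bna eb')
  also have "\<dots> = a [^] n \<otimes> a \<otimes> b [^] n \<otimes> b \<otimes> (e [^] n \<otimes> e [^] (n * (n - 1) div 2))"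
    using a b e by (simp add: eb'' m_assoc)
  also have "\<dots> = a [^] Suc n \<otimes> b [^] Suc n \<otimes> e [^] (Suc n * (Suc n - 1) div 2)"
    using a b e by (simp add: nat_pow_mult exp m_assoc)
  finally show ?case .
qed

lemma finite_closed_subgroupI:
  assumes sub: "I \<subseteq> carrier G" and fin: "finite I" and ne: "I \<noteq> {}"
    and closed: "\<And>a b. a \<in> I \<Longrightarrow> b \<in> I \<Longrightarrow> a \<otimes> b \<in> I"
  shows "subgroup I G"
proof (rule subgroupI[OF sub ne _ closed])
  fix g assume g: "g \<in> I"
  then have gc: "g \<in> carrier G" using sub by blast
  \<comment> \<open>left multiplication by g permutes the finite set I\<close>
  have onto: "(\<lambda>x. g \<otimes> x) ` I = I"
    using g closed sub gc by (intro endo_inj_surj[OF fin]) (auto intro!: inj_onI simp: subset_iff)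
  then obtain e where e: "e \<in> I" "g \<otimes> e = g" using g by (metis imageE)
  then have "\<one> \<in> I" using gc sub by (auto simp: subset_iff)
  then obtain h where h: "h \<in> I" "g \<otimes> h = \<one>" using onto by (metis imageE)
  then have "h = inv g"
    using gc sub inv_solve_left[of h g \<one>] by (auto simp: subset_iff)
  then show "inv g \<in> I" using h by simp
qed

lemma subgroup_nat_pow_closed:
  "subgroup H G \<Longrightarrow> h \<in> H \<Longrightarrow> h [^] (n::nat) \<in> H"
  using subgroup_int_pow_closed[of H h "int n"] by (simp add: int_pow_int)

lemma generate_pair_eqI:
  assumes "y \<in> generate G {x1, x2}" "z \<in> generate G {x1, x2}"
    "x1 \<in> generate G {y, z}" "x2 \<in> generate G {y, z}"
    "x1 \<in> carrier G" "x2 \<in> carrier G" "y \<in> carrier G" "z \<in> carrier G"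
  shows "generate G {y, z} = generate G {x1, x2}"
proof
  show "generate G {y, z} \<subseteq> generate G {x1, x2}"
    by (rule generate_subgroup_incl) (use assms generate_is_subgroup in auto)
  show "generate G {x1, x2} \<subseteq> generate G {y, z}"
    by (rule generate_subgroup_incl) (use assms generate_is_subgroup in auto)
qed

lemma generate_pair_shear_eq:
  assumes y: "y \<in> carrier G" and z: "z \<in> carrier G"
  shows "generate G {y, z \<otimes> y [^] (s::nat)} = generate G {y, z}"
proof (rule generate_pair_eqI)
  have "(z \<otimes> y [^] s) \<otimes> inv (y [^] s) \<in> generate G {y, z \<otimes> y [^] s}"
    using y z generate_is_subgroup[of "{y, z \<otimes> y [^] s}"]
    by (simp add: generate.incl subgroup.m_closed subgroup.m_inv_closed subgroup_nat_pow_closed)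
  then show "z \<in> generate G {y, z \<otimes> y [^] s}" using y z by (simp add: m_assoc)
  show "z \<otimes> y [^] s \<in> generate G {y, z}"
    using y z generate_is_subgroup[of "{y, z}"]
    by (simp add: generate.incl subgroup.m_closed subgroup_nat_pow_closed)
qed (use y z in \<open>auto intro: generate.incl\<close>)

lemma generate_pair_mult_eq:
  assumes y: "y \<in> carrier G" and z: "z \<in> carrier G"
  shows "generate G {y \<otimes> z, y} = generate G {y, z}"
proof (rule generate_pair_eqI)
  have "inv y \<otimes> (y \<otimes> z) \<in> generate G {y \<otimes> z, y}"
    using y z generate_is_subgroup[of "{y \<otimes> z, y}"]
    by (simp add: generate.incl subgroup.m_closed subgroup.m_inv_closed)
  then show "z \<in> generate G {y \<otimes> z, y}" using y z by (simp add: m_assoc[symmetric])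
  show "y \<otimes> z \<in> generate G {y, z}"
    using y z generate_is_subgroup[of "{y, z}"] by (simp add: generate.incl subgroup.m_closed)
qed (use y z in \<open>auto intro: generate.incl\<close>)

lemma generate_pair_iso_normal_form:
  assumes y: "y \<in> carrier G" and z: "z \<in> carrier G"
    and f_gen: "f ` carrier H \<subseteq> generate G {y, z}"
    and f_mult: "\<And>a b. a \<in> carrier H \<Longrightarrow> b \<in> carrier H \<Longrightarrow> f (a \<otimes>\<^bsub>H\<^esub> b) = f a \<otimes> f b"
    and H_closed: "\<And>a b. a \<in> carrier H \<Longrightarrow> b \<in> carrier H \<Longrightarrow> a \<otimes>\<^bsub>H\<^esub> b \<in> carrier H"
    and fin: "finite (carrier H)"
    and yz_img: "y \<in> f ` carrier H" "z \<in> f ` carrier H"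
    and inj: "inj_on f (carrier H)"
  shows "G\<lparr>carrier := generate G {y, z}\<rparr> \<cong> H"
proof -
  have img_closed: "a \<otimes> b \<in> f ` carrier H" if ab: "a \<in> f ` carrier H" "b \<in> f ` carrier H" for a b
  proof -
    obtain a' b' where ab': "a' \<in> carrier H" "b' \<in> carrier H" "a = f a'" "b = f b'"
      using ab by blast
    then have "a \<otimes> b = f (a' \<otimes>\<^bsub>H\<^esub> b')" by (simp add: f_mult)
    then show ?thesis using H_closed ab' by blast
  qed
  have "f ` carrier H \<subseteq> carrier G"
    using f_gen generate_incl[of "{y, z}"] y z by blast
  then have "subgroup (f ` carrier H) G"
    using fin yz_img img_closed by (intro finite_closed_subgroupI) auto
  then have onto: "generate G {y, z} = f ` carrier H"
    using yz_img f_gen by (intro equalityI generate_subgroup_incl) auto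
  have "f \<in> hom H (G\<lparr>carrier := generate G {y, z}\<rparr>)"
    using f_gen f_mult by (intro homI) auto
  then have "f \<in> iso H (G\<lparr>carrier := generate G {y, z}\<rparr>)"
    using onto inj by (simp add: iso_def bij_betw_def)
  then show ?thesis using iso_sym_of_closed H_closed by blast
qed

text \<open>The carry term t * ((i + j) div pp) comes from z^pp = y^t when the exponents of z
  overflow.\<close>

lemma metacyclic_normal_form_mult:
  fixes q pp r t :: int
  assumes y: "y \<in> carrier G" and z: "z \<in> carrier G"
    and yq: "y [^] q = \<one>" and zpp: "z [^] pp = y [^] t" and conj: "z \<otimes> y \<otimes> inv z = y [^] r"
    and i: "0 \<le> i" and j: "0 \<le> j"
  shows "(y [^] x \<otimes> z [^] i) \<otimes> (y [^] u \<otimes> z [^] j)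
    = y [^] ((x + r ^ nat i * u + t * ((i + j) div pp)) mod q) \<otimes> z [^] ((i + j) mod pp)"
proof -
  have zi: "z [^] i = z [^] nat i" using i by (simp add: int_pow_of_nonneg)
  have zz: "z [^] i \<otimes> z [^] j = y [^] (t * ((i + j) div pp)) \<otimes> z [^] ((i + j) mod pp)"
  proof -
    have "z [^] i \<otimes> z [^] j = z [^] (pp * ((i + j) div pp) + (i + j) mod pp)"
      using z by (simp add: int_pow_mult)
    also have "\<dots> = z [^] (pp * ((i + j) div pp)) \<otimes> z [^] ((i + j) mod pp)"
      using z by (rule int_pow_mult)
    also have "\<dots> = (z [^] pp) [^] ((i + j) div pp) \<otimes> z [^] ((i + j) mod pp)"
      using z by (simp add: int_pow_pow)
    finally show ?thesis using y by (simp add: zpp int_pow_pow)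
  qed
  have "(y [^] x \<otimes> z [^] i) \<otimes> (y [^] u \<otimes> z [^] j) = y [^] x \<otimes> (z [^] nat i \<otimes> y [^] u) \<otimes> z [^] j"
    using y z by (simp add: zi m_assoc)
  also have "\<dots> = y [^] x \<otimes> y [^] (r ^ nat i * u) \<otimes> (z [^] i \<otimes> z [^] j)"
    using y z by (simp add: conj_pow_commute[OF z y conj] zi m_assoc)
  also have "\<dots> = y [^] (x + r ^ nat i * u + t * ((i + j) div pp)) \<otimes> z [^] ((i + j) mod pp)"
    using y z by (simp add: zz int_pow_mult m_assoc)
  finally show ?thesis
    by (simp add: int_pow_mod_eq[OF y yq])
qed

lemma generate_pair_iso_metacyclic:
  fixes H :: "(int \<times> int) monoid" and q pp r t :: int
  assumes y: "y \<in> carrier G" and z: "z \<in> carrier G" and q: "1 < q" and pp: "1 < pp"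
    and yq: "y [^] q = \<one>" and zpp: "z [^] pp = y [^] t" and conj: "z \<otimes> y \<otimes> inv z = y [^] r"
    and H_carrier: "carrier H = {0..<q} \<times> {0..<pp}"
    and H_mult: "\<And>x i u j. x \<in> {0..<q} \<Longrightarrow> i \<in> {0..<pp} \<Longrightarrow> u \<in> {0..<q} \<Longrightarrow> j \<in> {0..<pp} \<Longrightarrow>
        (x, i) \<otimes>\<^bsub>H\<^esub> (u, j) = ((x + r ^ nat i * u + t * ((i + j) div pp)) mod q, (i + j) mod pp)"
    and inj: "inj_on (\<lambda>(x, i). y [^] x \<otimes> z [^] i) ({0..<q} \<times> {0..<pp})"
  shows "G\<lparr>carrier := generate G {y, z}\<rparr> \<cong> H"
proof (rule generate_pair_iso_normal_form[OF y z])
  let ?f = "\<lambda>(x::int, i::int). y [^] x \<otimes> z [^] i"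
  have "y \<in> generate G {y, z}" "z \<in> generate G {y, z}" by (auto intro: generate.incl)
  then show "?f ` carrier H \<subseteq> generate G {y, z}"
    using y z by (auto intro!: subgroup.m_closed subgroup_int_pow_closed generate_is_subgroup)
  show "?f (a \<otimes>\<^bsub>H\<^esub> b) = ?f a \<otimes> ?f b" if "a \<in> carrier H" "b \<in> carrier H" for a b
    using that by (auto simp: H_carrier H_mult metacyclic_normal_form_mult[OF y z yq zpp conj])
  show "a \<otimes>\<^bsub>H\<^esub> b \<in> carrier H" if "a \<in> carrier H" "b \<in> carrier H" for a b
    using that q pp by (auto simp: H_carrier H_mult)
  show "finite (carrier H)" by (simp add: H_carrier)
  show "y \<in> ?f ` carrier H"
    using y q pp by (intro image_eqI[of _ _ "(1, 0)"]) (auto simp: H_carrier)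
  show "z \<in> ?f ` carrier H"
    using z q pp by (intro image_eqI[of _ _ "(0, 1)"]) (auto simp: H_carrier)
  show "inj_on ?f (carrier H)" using inj by (simp add: H_carrier)
qed

lemma heisenberg_normal_form_mult:
  fixes a b c a' b' c' :: nat
  assumes u: "u \<in> carrier G" and v: "v \<in> carrier G" and e: "e \<in> carrier G"
    and vu: "v \<otimes> u = u \<otimes> v \<otimes> e" and eu: "e \<otimes> u = u \<otimes> e" and ev: "e \<otimes> v = v \<otimes> e"
  shows "u [^] b \<otimes> v [^] a \<otimes> e [^] c \<otimes> (u [^] b' \<otimes> v [^] a' \<otimes> e [^] c')
     = u [^] (b + b') \<otimes> v [^] (a + a') \<otimes> e [^] (c + c' + a * b')"
proof -
  have eu': "e [^] k \<otimes> u [^] m = u [^] m \<otimes> e [^] k" for k m :: nat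
    by (rule nat_pow_commute[OF eu e u])
  have ev': "e [^] k \<otimes> v [^] m = v [^] m \<otimes> e [^] k" for k m :: nat
    by (rule nat_pow_commute[OF ev e v])
  have "u [^] b \<otimes> v [^] a \<otimes> e [^] c \<otimes> (u [^] b' \<otimes> v [^] a' \<otimes> e [^] c')
      = u [^] b \<otimes> v [^] a \<otimes> (e [^] c \<otimes> u [^] b') \<otimes> v [^] a' \<otimes> e [^] c'"
    using u v e by (simp add: m_assoc)
  also have "\<dots> = u [^] b \<otimes> (v [^] a \<otimes> u [^] b') \<otimes> (e [^] c \<otimes> v [^] a') \<otimes> e [^] c'"
    using u v e by (simp add: eu' m_assoc)
  also have "\<dots> = u [^] b \<otimes> (u [^] b' \<otimes> v [^] a \<otimes> e [^] (a * b')) \<otimes> (v [^] a' \<otimes> e [^] c) \<otimes> e [^] c'"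
    using u v e by (simp add: central_commutator_pow[OF u v e vu eu ev] ev')
  also have "\<dots> = u [^] b \<otimes> u [^] b' \<otimes> v [^] a \<otimes> (e [^] (a * b') \<otimes> v [^] a') \<otimes> e [^] c \<otimes> e [^] c'"
    using u v e by (simp add: m_assoc)
  also have "\<dots> = u [^] b \<otimes> u [^] b' \<otimes> (v [^] a \<otimes> v [^] a') \<otimes> (e [^] (a * b') \<otimes> e [^] c \<otimes> e [^] c')"
    using u v e by (simp add: ev' m_assoc)
  also have "\<dots> = u [^] (b + b') \<otimes> v [^] (a + a') \<otimes> e [^] (c + c' + a * b')"
    using u v e by (simp add: nat_pow_mult m_assoc add_ac)
  finally show ?thesis .
qed

lemma generate_pair_iso_heisenberg:
  fixes H :: "(int \<times> int \<times> int) monoid" and pp :: int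
  assumes u: "u \<in> carrier G" and v: "v \<in> carrier G" and e: "e \<in> carrier G" and pp: "1 < pp"
    and upp: "u [^] pp = \<one>" and vpp: "v [^] pp = \<one>" and epp: "e [^] pp = \<one>"
    and vu: "v \<otimes> u = u \<otimes> v \<otimes> e" and eu: "e \<otimes> u = u \<otimes> e" and ev: "e \<otimes> v = v \<otimes> e"
    and e_gen: "e \<in> generate G {u, v}"
    and H_carrier: "carrier H = {0..<pp} \<times> {0..<pp} \<times> {0..<pp}"
    and H_mult: "\<And>a b c a' b' c'. a \<in> {0..<pp} \<Longrightarrow> b \<in> {0..<pp} \<Longrightarrow> c \<in> {0..<pp} \<Longrightarrow>
        a' \<in> {0..<pp} \<Longrightarrow> b' \<in> {0..<pp} \<Longrightarrow> c' \<in> {0..<pp} \<Longrightarrow>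
        (a, b, c) \<otimes>\<^bsub>H\<^esub> (a', b', c') = ((a + a') mod pp, (b + b') mod pp, (c + c' + a * b') mod pp)"
    and inj: "inj_on (\<lambda>(a, b, c). u [^] nat b \<otimes> v [^] nat a \<otimes> e [^] nat c)
      ({0..<pp} \<times> {0..<pp} \<times> {0..<pp})"
  shows "G\<lparr>carrier := generate G {u, v}\<rparr> \<cong> H"
proof -
  define f where "f = (\<lambda>(a::int, b::int, c::int). u [^] nat b \<otimes> v [^] nat a \<otimes> e [^] nat c)"
  have f_mult: "f (a, b, c) \<otimes> f (a', b', c') = f ((a + a') mod pp, (b + b') mod pp, (c + c' + a * b') mod pp)"
    if "0 \<le> a" "0 \<le> b" "0 \<le> c" "0 \<le> a'" "0 \<le> b'" "0 \<le> c'" for a b c a' b' c'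
  proof -
    have "f (a, b, c) \<otimes> f (a', b', c')
        = u [^] (nat b + nat b') \<otimes> v [^] (nat a + nat a') \<otimes> e [^] (nat c + nat c' + nat a * nat b')"
      by (simp add: f_def heisenberg_normal_form_mult[OF u v e vu eu ev])
    also have "\<dots> = u [^] nat (int (nat b + nat b') mod pp) \<otimes> v [^] nat (int (nat a + nat a') mod pp)
        \<otimes> e [^] nat (int (nat c + nat c' + nat a * nat b') mod pp)"
      using pp by (simp only: nat_pow_mod_eq[OF u upp] nat_pow_mod_eq[OF v vpp] nat_pow_mod_eq[OF e epp])
    also have "\<dots> = f ((a + a') mod pp, (b + b') mod pp, (c + c' + a * b') mod pp)"
    proof -
      have "int (nat b + nat b') = b + b'" "int (nat a + nat a') = a + a'"
        "int (nat c + nat c' + nat a * nat b') = c + c' + a * b'"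
        using that by (auto simp: of_nat_mult)
      then show ?thesis by (simp only: f_def prod.case)
    qed
    finally show ?thesis .
  qed
  show ?thesis
  proof (rule generate_pair_iso_normal_form[OF u v])
    have "u \<in> generate G {u, v}" "v \<in> generate G {u, v}" by (auto intro: generate.incl)
    then show "f ` carrier H \<subseteq> generate G {u, v}"
      using u v e_gen
      by (auto simp: f_def intro!: subgroup.m_closed subgroup_nat_pow_closed generate_is_subgroup)
    show "f (x \<otimes>\<^bsub>H\<^esub> y) = f x \<otimes> f y" if "x \<in> carrier H" "y \<in> carrier H" for x y
      using that by (auto simp: H_carrier H_mult f_mult)
    show "x \<otimes>\<^bsub>H\<^esub> y \<in> carrier H" if "x \<in> carrier H" "y \<in> carrier H" for x y
      using that pp by (auto simp: H_carrier H_mult)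
    show "finite (carrier H)" by (simp add: H_carrier)
    show "u \<in> f ` carrier H"
      using u pp by (intro image_eqI[of _ _ "(0, 1, 0)"]) (auto simp: H_carrier f_def)
    show "v \<in> f ` carrier H"
      using v pp by (intro image_eqI[of _ _ "(1, 0, 0)"]) (auto simp: H_carrier f_def)
    show "inj_on f (carrier H)" using inj by (simp add: H_carrier f_def)
  qed
qed

end

locale elementary_abelian_extension = G: group G + M: comm_group M
  for G (structure) and M (structure) +
  fixes phi and p :: nat
  assumes phi_hom: "phi \<in> hom G M"
    and prime_p: "Factorial_Ring.prime p"
    and M_exponent: "\<forall>m \<in> carrier M. m [^]\<^bsub>M\<^esub> p = \<one>\<^bsub>M\<^esub>"
    and card_kernel: "card (kernel G M phi) = p"
begin

sublocale phi: group_hom G M phi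
  using phi_hom by (simp add: group_hom_def group_hom_axioms_def G.is_group M.is_group)

abbreviation "K \<equiv> kernel G M phi"

definition indep_mod_p where
  "indep_mod_p u v \<longleftrightarrow>
     (\<forall>x i::int. u [^]\<^bsub>M\<^esub> x \<otimes>\<^bsub>M\<^esub> v [^]\<^bsub>M\<^esub> i = \<one>\<^bsub>M\<^esub> \<longrightarrow> int p dvd x \<and> int p dvd i)"

lemma p_gt_1: "1 < p"
  using prime_p prime_gt_1_nat by blast

lemma kernel_iff: "k \<in> K \<longleftrightarrow> k \<in> carrier G \<and> phi k = \<one>\<^bsub>M\<^esub>"
  by (simp add: kernel_def)

lemma kernel_generate_eq:
  assumes k: "k \<in> K" "k \<noteq> \<one>"
  shows "generate G {k} = K"
proof -
  have kc: "k \<in> carrier G" using k kernel_iff by blast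
  have fin: "finite K" using card_kernel p_gt_1 card_ge_0_finite by force
  have sub: "generate G {k} \<subseteq> K"
    using k phi.subgroup_kernel by (intro G.generate_subgroup_incl) auto
  have "subgroup (generate G {k}) (G\<lparr>carrier := K\<rparr>)"
    using kc by (intro G.subgroup_incl[OF G.generate_is_subgroup phi.subgroup_kernel sub]) auto
  from group.lagrange[OF G.subgroup_imp_group[OF phi.subgroup_kernel] this]
  have "card (generate G {k}) dvd order (G\<lparr>carrier := K\<rparr>)" by (metis dvd_triv_right)
  then have "card (generate G {k}) dvd p" by (simp add: order_def card_kernel)
  moreover have "card {\<one>, k} \<le> card (generate G {k})"
    using fin sub generate.one generate.incl[of k "{k}" G]
    by (intro card_mono) (auto intro: finite_subset)
  ultimately have "card (generate G {k}) = p"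
    using k prime_p by (auto simp: prime_nat_iff)
  then show ?thesis using card_subset_eq[OF fin sub] card_kernel by simp
qed

lemma kernel_ord:
  assumes "k \<in> K" "k \<noteq> \<one>"
  shows "G.ord k = p"
  using G.generate_pow_card kernel_generate_eq[OF assms] card_kernel assms kernel_iff by metis

lemma kernel_pow_p: "k \<in> K \<Longrightarrow> k [^] p = \<one>"
  using kernel_ord G.pow_ord_eq_1 kernel_iff by (metis G.nat_pow_one)

lemma kernel_int_pow_eq_one_iff:
  assumes "k \<in> K" "k \<noteq> \<one>"
  shows "k [^] (d::int) = \<one> \<longleftrightarrow> int p dvd d"
  using G.int_pow_eq_id[of k d] kernel_ord[OF assms] assms kernel_iff by simp

lemma kernel_eq_int_pow:
  assumes "k \<in> K" "k \<noteq> \<one>" "k' \<in> K"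
  shows "\<exists>w::int. k' = k [^] w"
  using kernel_generate_eq[OF assms(1,2)] G.generate_pow[of k] assms kernel_iff by auto

lemma pow_p_in_kernel: "g \<in> carrier G \<Longrightarrow> g [^] p \<in> K"
  using M_exponent by (simp add: kernel_iff phi.hom_nat_pow)

lemma pow_p_square: "g \<in> carrier G \<Longrightarrow> g [^] (p * p) = \<one>"
  using kernel_pow_p[OF pow_p_in_kernel] by (simp add: G.nat_pow_pow)

lemma commutator_in_kernel:
  assumes "y \<in> carrier G" "z \<in> carrier G"
  shows "y \<otimes> z \<otimes> inv y \<otimes> inv z \<in> K"
proof -
  have "phi (y \<otimes> z \<otimes> inv y \<otimes> inv z) = (phi y \<otimes>\<^bsub>M\<^esub> phi z) \<otimes>\<^bsub>M\<^esub> inv\<^bsub>M\<^esub> (phi y \<otimes>\<^bsub>M\<^esub> phi z)"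
    using assms by (simp add: M.inv_mult M.m_assoc)
  then show ?thesis using assms by (simp add: kernel_iff)
qed

lemma kernel_central:
  assumes k: "k \<in> K" and g: "g \<in> carrier G"
  shows "k \<otimes> g = g \<otimes> k"
proof (cases "k = \<one>")
  case True
  then show ?thesis using g by simp
next
  case False
  have kc: "k \<in> carrier G" using k kernel_iff by blast
  have "g \<otimes> k \<otimes> inv g \<in> K" using g kc k by (simp add: kernel_iff)
  then obtain s :: int where s: "g \<otimes> k \<otimes> inv g = k [^] s"
    using kernel_eq_int_pow[OF k False] by blast
  have "k [^] (1::int) = k [^] (s ^ (p * p))"
    using G.conj_pow_commute[OF g kc s, of "p * p" 1] pow_p_square[OF g] kc by simp
  then have "[s ^ (p * p) = 1] (mod int p)"
    using G.int_pow_eq[OF kc] kernel_ord[OF k False] by (simp add: cong_iff_dvd_diff)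
  then have "[s = 1] (mod int p)"
    using int_cong_pow_prime_square[OF prime_p] by (metis cong_sym cong_trans)
  then have "k [^] s = k"
    using G.int_pow_eq[OF kc, of s 1] kernel_ord[OF k False] kc
    by (simp add: cong_iff_dvd_diff dvd_diff_commute)
  then show ?thesis using s g kc by (metis G.inv_solve_right G.m_closed)
qed

lemma mult_commutator_swap:
  assumes y: "y \<in> carrier G" and z: "z \<in> carrier G"
  shows "y \<otimes> z = z \<otimes> y \<otimes> (y \<otimes> z \<otimes> inv y \<otimes> inv z)"
proof -
  let ?c = "y \<otimes> z \<otimes> inv y \<otimes> inv z"
  have "z \<otimes> y \<otimes> ?c = ?c \<otimes> (z \<otimes> y)"
    using kernel_central[OF commutator_in_kernel[OF y z]] y z by simp
  also have "\<dots> = y \<otimes> z \<otimes> inv y \<otimes> (inv z \<otimes> z) \<otimes> y"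
    using y z by (simp only: G.m_assoc G.m_closed G.inv_closed)
  also have "\<dots> = y \<otimes> z"
    using y z by (simp add: G.m_assoc)
  finally show ?thesis by simp
qed

lemma ord_of_lift:
  assumes g: "g \<in> carrier G" and gp: "g [^] p = \<one>" and ng: "phi g \<noteq> \<one>\<^bsub>M\<^esub>"
    and x: "x \<in> carrier G" and px: "phi x = phi g"
  shows "G.ord x = p"
proof -
  define k where "k = inv g \<otimes> x"
  have kK: "k \<in> K" using g x px by (simp add: k_def kernel_iff)
  have "x = g \<otimes> k" using g x by (simp add: k_def G.m_assoc[symmetric])
  then have "x [^] p = g [^] p \<otimes> k [^] p"
    using kernel_central[OF kK g] g kK kernel_iff by (simp add: G.pow_mult_distrib)
  then have "G.ord x dvd p" using gp kernel_pow_p[OF kK] G.pow_eq_id[OF x] by simp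
  moreover have "x \<noteq> \<one>" using ng px by auto
  ultimately show ?thesis using prime_p G.ord_eq_1[OF x] by (auto simp: prime_nat_iff)
qed

lemma V0_set_iff:
  assumes x: "x \<in> carrier G" and nontriv: "phi x \<noteq> \<one>\<^bsub>M\<^esub>"
  shows "phi x \<in> V0_set p G M phi \<longleftrightarrow> x [^] p = \<one>"
proof
  assume "phi x \<in> V0_set p G M phi"
  then show "x [^] p = \<one>" using x G.pow_ord_eq_1[OF x] by (simp add: V0_set_def)
next
  assume "x [^] p = \<one>"
  then show "phi x \<in> V0_set p G M phi"
    using x nontriv ord_of_lift[OF x] by (auto simp: V0_set_def)
qed

lemma V_set_iff:
  "x \<in> carrier G \<Longrightarrow> phi x \<noteq> \<one>\<^bsub>M\<^esub> \<Longrightarrow> phi x \<in> V_set p G M phi \<longleftrightarrow> x [^] p = \<one>"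
  by (simp add: V_set_def V0_set_iff)

lemma kernel_unique_nontrivial:
  assumes "p = 2" and "k \<in> K" "k \<noteq> \<one>" and "k' \<in> K" "k' \<noteq> \<one>"
  shows "k = k'"
proof (rule ccontr)
  assume "k \<noteq> k'"
  then have "card {\<one>, k, k'} = 3" using assms by auto
  moreover have "card {\<one>, k, k'} \<le> card K"
    using assms card_kernel phi.subgroup_kernel subgroup.one_closed
    by (intro card_mono) (auto intro: card_ge_0_finite)
  ultimately show False using assms card_kernel by simp
qed

lemma M_pow_mod_p:
  assumes m: "m \<in> carrier M"
  shows "m [^]\<^bsub>M\<^esub> (n::nat) = m [^]\<^bsub>M\<^esub> (n mod p)"
proof -
  have "m [^]\<^bsub>M\<^esub> n = m [^]\<^bsub>M\<^esub> (p * (n div p)) \<otimes>\<^bsub>M\<^esub> m [^]\<^bsub>M\<^esub> (n mod p)"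
    using M.nat_pow_mult[OF m, of "p * (n div p)" "n mod p"] by simp
  also have "m [^]\<^bsub>M\<^esub> (p * (n div p)) = \<one>\<^bsub>M\<^esub>"
    using M_exponent m by (simp add: M.nat_pow_pow[symmetric])
  finally show ?thesis using m by simp
qed

lemma M_int_pow_mod_p:
  assumes m: "m \<in> carrier M"
  shows "m [^]\<^bsub>M\<^esub> (x::int) = m [^]\<^bsub>M\<^esub> nat (x mod int p)"
proof -
  have "m [^]\<^bsub>M\<^esub> (int p) = \<one>\<^bsub>M\<^esub>" using M_exponent m by (simp add: int_pow_int)
  then have "m [^]\<^bsub>M\<^esub> x = m [^]\<^bsub>M\<^esub> (x mod int p)" using M.int_pow_mod_eq[OF m] by simp
  also have "\<dots> = m [^]\<^bsub>M\<^esub> nat (x mod int p)" using p_gt_1 by (simp add: int_pow_of_nonneg)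
  finally show ?thesis .
qed

lemma indep_mod_p_sym:
  assumes "u \<in> carrier M" "v \<in> carrier M" "indep_mod_p u v"
  shows "indep_mod_p v u"
  using assms by (simp add: indep_mod_p_def M.m_comm)

lemma indep_mod_p_shear:
  assumes u: "u \<in> carrier M" and v: "v \<in> carrier M" and ind: "indep_mod_p u v"
  shows "indep_mod_p u (v \<otimes>\<^bsub>M\<^esub> u [^]\<^bsub>M\<^esub> (s::nat))"
  unfolding indep_mod_p_def
proof (intro allI impI)
  fix x i :: int
  assume "u [^]\<^bsub>M\<^esub> x \<otimes>\<^bsub>M\<^esub> (v \<otimes>\<^bsub>M\<^esub> u [^]\<^bsub>M\<^esub> s) [^]\<^bsub>M\<^esub> i = \<one>\<^bsub>M\<^esub>"
  moreover have "u [^]\<^bsub>M\<^esub> x \<otimes>\<^bsub>M\<^esub> (v \<otimes>\<^bsub>M\<^esub> u [^]\<^bsub>M\<^esub> s) [^]\<^bsub>M\<^esub> i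
      = u [^]\<^bsub>M\<^esub> (x + int s * i) \<otimes>\<^bsub>M\<^esub> v [^]\<^bsub>M\<^esub> i"
    using u v by (simp add: int_pow_int[symmetric] M.int_pow_distrib M.int_pow_mult M.int_pow_pow M.m_ac)
  ultimately have "int p dvd x + int s * i" "int p dvd i"
    using ind unfolding indep_mod_p_def by metis+
  then show "int p dvd x \<and> int p dvd i" by (metis dvd_add_left_iff dvd_mult)
qed

lemma indep_mod_p_eqD:
  assumes u: "u \<in> carrier M" and v: "v \<in> carrier M" and ind: "indep_mod_p u v"
    and eq: "u [^]\<^bsub>M\<^esub> (x::int) \<otimes>\<^bsub>M\<^esub> v [^]\<^bsub>M\<^esub> (i::int) = u [^]\<^bsub>M\<^esub> x' \<otimes>\<^bsub>M\<^esub> v [^]\<^bsub>M\<^esub> i'"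
  shows "int p dvd x - x'" "int p dvd i - i'"
proof -
  have "u [^]\<^bsub>M\<^esub> (x - x') \<otimes>\<^bsub>M\<^esub> v [^]\<^bsub>M\<^esub> (i - i')
     = (u [^]\<^bsub>M\<^esub> x \<otimes>\<^bsub>M\<^esub> v [^]\<^bsub>M\<^esub> i) \<otimes>\<^bsub>M\<^esub> inv\<^bsub>M\<^esub> (u [^]\<^bsub>M\<^esub> x' \<otimes>\<^bsub>M\<^esub> v [^]\<^bsub>M\<^esub> i')"
    using u v by (simp add: M.int_pow_diff M.inv_mult M.m_ac)
  also have "\<dots> = \<one>\<^bsub>M\<^esub>" using u v by (simp add: eq)
  finally show "int p dvd x - x'" "int p dvd i - i'"
    using ind unfolding indep_mod_p_def by blast+
qed

lemma normal_form_inj: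
  assumes y: "y \<in> carrier G" and z: "z \<in> carrier G" and ind: "indep_mod_p (phi y) (phi z)"
    and q_dvd: "\<And>d. int p dvd d \<Longrightarrow> y [^] d = \<one> \<Longrightarrow> q dvd d"
  shows "inj_on (\<lambda>(x, i). y [^] x \<otimes> z [^] i) ({0..<q} \<times> {0..<int p})"
proof (rule inj_onI, clarify)
  fix x i x' i' :: int
  assume range: "x \<in> {0..<q}" "i \<in> {0..<int p}" "x' \<in> {0..<q}" "i' \<in> {0..<int p}"
    and eq: "y [^] x \<otimes> z [^] i = y [^] x' \<otimes> z [^] i'"
  have "phi y [^]\<^bsub>M\<^esub> x \<otimes>\<^bsub>M\<^esub> phi z [^]\<^bsub>M\<^esub> i = phi y [^]\<^bsub>M\<^esub> x' \<otimes>\<^bsub>M\<^esub> phi z [^]\<^bsub>M\<^esub> i'"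
    using arg_cong[OF eq, of phi] y z by (simp add: phi.hom_int_pow)
  then have "int p dvd x - x'" "int p dvd i - i'"
    using indep_mod_p_eqD[OF _ _ ind] y z by simp_all
  then have ii: "i = i'" using int_mod_eqI[OF range(2,4)] by simp
  then have "y [^] (x - x') = \<one>"
    using eq y z by (simp add: G.int_pow_diff)
  then show "x = x' \<and> i = i'"
    using q_dvd \<open>int p dvd x - x'\<close> int_mod_eqI[OF range(1,3)] ii by simp
qed

lemma Zmod_square_carrier: "carrier (Zmod (p ^ 2) \<times>\<times> Zmod p) = {0..<int p ^ 2} \<times> {0..<int p}"
  using p_gt_1 by (simp add: DirProd_def carrier_integer_mod_group)

lemma lifts_iso_metacyclic:
  fixes H :: "(int \<times> int) monoid" and r :: int
  assumes y: "y \<in> carrier G" and z: "z \<in> carrier G" and yp: "y [^] p \<noteq> \<one>"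
    and zp: "z [^] p = \<one>" and ind: "indep_mod_p (phi y) (phi z)"
    and conj: "z \<otimes> y \<otimes> inv z = y [^] r"
    and H_carrier: "carrier H = {0..<int p ^ 2} \<times> {0..<int p}"
    and H_mult: "\<And>x i u j. (x, i) \<otimes>\<^bsub>H\<^esub> (u, j) = ((x + r ^ nat i * u) mod (int p ^ 2), (i + j) mod int p)"
  shows "G\<lparr>carrier := generate G {y, z}\<rparr> \<cong> H"
proof (rule G.generate_pair_iso_metacyclic[OF y z _ _ _ _ conj H_carrier, where t = 0])
  show "1 < int p ^ 2" "1 < int p"
    using p_gt_1 by (simp_all add: power2_eq_square less_1_mult)
  show "y [^] (int p ^ 2) = \<one>"
    using pow_p_square[OF y] by (simp add: power2_eq_square int_pow_int[symmetric])
  show "z [^] (int p) = y [^] (0::int)" using zp by (simp add: int_pow_int)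
  show "(x, i) \<otimes>\<^bsub>H\<^esub> (u, j) = ((x + r ^ nat i * u + 0 * ((i + j) div int p)) mod int p ^ 2,
      (i + j) mod int p)" for x i u j
    by (simp add: H_mult)
  show "inj_on (\<lambda>(x, i). y [^] x \<otimes> z [^] i) ({0..<int p ^ 2} \<times> {0..<int p})"
  proof (rule normal_form_inj[OF y z ind])
    fix d assume "int p dvd d" "y [^] d = \<one>"
    then obtain s where s: "d = int p * s" "(y [^] p) [^] s = \<one>"
      using y by (auto elim!: dvdE simp: G.int_pow_pow int_pow_int[symmetric])
    then have "int p dvd s"
      using kernel_int_pow_eq_one_iff[OF pow_p_in_kernel[OF y] yp] by simp
    then show "int p ^ 2 dvd d" using s by (simp add: power2_eq_square)
  qed
qed

lemma lifts_iso_Zmod_or_U: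
  assumes y: "y \<in> carrier G" and z: "z \<in> carrier G" and yp: "y [^] p \<noteq> \<one>"
    and zp: "z [^] p = \<one>" and ind: "indep_mod_p (phi y) (phi z)"
  shows "(z \<otimes> y = y \<otimes> z \<longrightarrow> G\<lparr>carrier := generate G {y, z}\<rparr> \<cong> Zmod (p ^ 2) \<times>\<times> Zmod p)
    \<and> (G\<lparr>carrier := generate G {y, z}\<rparr> \<cong> Zmod (p ^ 2) \<times>\<times> Zmod p
       \<or> (\<exists>a. coprime a (int p) \<and> G\<lparr>carrier := generate G {y, z}\<rparr> \<cong> U_grp p a))"
proof -
  define d where "d = z \<otimes> y \<otimes> inv z \<otimes> inv y"
  have dK: "d \<in> K" using commutator_in_kernel[OF z y] by (simp add: d_def)
  have conj: "z \<otimes> y \<otimes> inv z = d \<otimes> y" using y z by (simp add: d_def G.m_assoc)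
  have abelian: "G\<lparr>carrier := generate G {y, z}\<rparr> \<cong> Zmod (p ^ 2) \<times>\<times> Zmod p" if "d = \<one>"
  proof (rule lifts_iso_metacyclic[OF y z yp zp ind _ Zmod_square_carrier])
    show "z \<otimes> y \<otimes> inv z = y [^] (1::int)" using that conj y by simp
  qed (simp add: DirProd_def)
  have "\<exists>a. coprime a (int p) \<and> G\<lparr>carrier := generate G {y, z}\<rparr> \<cong> U_grp p a" if "d \<noteq> \<one>"
  proof -
    obtain w :: int where w: "d = (y [^] p) [^] w"
      using kernel_eq_int_pow[OF pow_p_in_kernel[OF y] yp dK] by blast
    then have "\<not> int p dvd w"
      using that kernel_int_pow_eq_one_iff[OF pow_p_in_kernel[OF y] yp] by simp
    then have "coprime w (int p)"
      using prime_imp_coprime[of "int p" w] prime_p by (simp add: coprime_commute)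
    moreover have "z \<otimes> y \<otimes> inv z = y [^] (1 + w * int p)"
    proof -
      have "d \<otimes> y = y [^] (int p * w) \<otimes> y [^] (1::int)"
        using w y by (simp add: G.int_pow_pow int_pow_int[symmetric])
      also have "\<dots> = y [^] (int p * w + 1)" using G.int_pow_mult[OF y, of "int p * w" 1] by simp
      also have "int p * w + 1 = 1 + w * int p" by simp
      finally show ?thesis using conj by simp
    qed
    then have "G\<lparr>carrier := generate G {y, z}\<rparr> \<cong> U_grp p w"
      by (rule lifts_iso_metacyclic[OF y z yp zp ind]) (simp add: U_grp_def)+
    ultimately show ?thesis by blast
  qed
  moreover have "d = \<one>" if "z \<otimes> y = y \<otimes> z"
    using that y z by (simp add: d_def G.m_assoc)
  ultimately show ?thesis using abelian by blast
qed

end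

locale lifted_pair = elementary_abelian_extension +
  fixes x1 x2
  assumes x1: "x1 \<in> carrier G" and x2: "x2 \<in> carrier G"
    and rank_two: "card (generate M {phi x1, phi x2}) = p ^ 2"
begin

definition commutator where "commutator = x1 \<otimes> x2 \<otimes> inv x1 \<otimes> inv x2"

text \<open>The p^2 products m1^i m2^j with i, j < p form a subgroup containing m1 and m2, which
  generate a subgroup of order p^2; so they are pairwise distinct.\<close>

lemma lift_images_products_inj:
  "inj_on (\<lambda>(i, j). phi x1 [^]\<^bsub>M\<^esub> (i::nat) \<otimes>\<^bsub>M\<^esub> phi x2 [^]\<^bsub>M\<^esub> (j::nat)) ({..<p} \<times> {..<p})"
  (is "inj_on ?F _")
proof -
  let ?m1 = "phi x1" and ?m2 = "phi x2"
  define F where "F = ?F"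
  define T where "T = F ` ({..<p} \<times> {..<p})"
  have m: "?m1 \<in> carrier M" "?m2 \<in> carrier M" using x1 x2 by simp_all
  have F_mult: "F (i, j) \<otimes>\<^bsub>M\<^esub> F (i', j') = F ((i + i') mod p, (j + j') mod p)" for i j i' j'
  proof -
    have "F (i, j) \<otimes>\<^bsub>M\<^esub> F (i', j')
        = (?m1 [^]\<^bsub>M\<^esub> i \<otimes>\<^bsub>M\<^esub> ?m1 [^]\<^bsub>M\<^esub> i') \<otimes>\<^bsub>M\<^esub> (?m2 [^]\<^bsub>M\<^esub> j \<otimes>\<^bsub>M\<^esub> ?m2 [^]\<^bsub>M\<^esub> j')"
      using m by (simp add: F_def M.m_ac)
    then show ?thesis
      using m M_pow_mod_p[OF m(1), of "i + i'"] M_pow_mod_p[OF m(2), of "j + j'"]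
      by (simp add: F_def M.nat_pow_mult)
  qed
  have "subgroup T M"
  proof (rule M.finite_closed_subgroupI)
    show "T \<subseteq> carrier M" using m by (auto simp: T_def F_def)
    show "finite T" "T \<noteq> {}" using p_gt_1 by (auto simp: T_def)
    fix a b assume "a \<in> T" "b \<in> T"
    then obtain i j i' j' where "a = F (i, j)" "b = F (i', j')" by (auto simp: T_def)
    then show "a \<otimes>\<^bsub>M\<^esub> b \<in> T" using F_mult p_gt_1 by (auto simp: T_def)
  qed
  moreover have "?m1 = F (1, 0)" "?m2 = F (0, 1)" using m by (simp_all add: F_def)
  ultimately have "generate M {?m1, ?m2} \<subseteq> T"
    using p_gt_1 by (intro M.generate_subgroup_incl) (auto simp: T_def)
  then have "card (generate M {?m1, ?m2}) \<le> card T"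
    by (rule card_mono[rotated]) (simp add: T_def)
  then have "card ({..<p} \<times> {..<p}) \<le> card T"
    using rank_two by (simp add: power2_eq_square)
  moreover have "card T \<le> card ({..<p} \<times> {..<p})"
    unfolding T_def by (rule card_image_le) simp
  ultimately have "card (F ` ({..<p} \<times> {..<p})) = card ({..<p} \<times> {..<p})"
    by (simp add: T_def)
  then show ?thesis
    unfolding F_def by (rule eq_card_imp_inj_on[rotated]) simp
qed

lemma indep_lifts: "indep_mod_p (phi x1) (phi x2)"
  unfolding indep_mod_p_def
proof (intro allI impI)
  fix x i :: int
  let ?F = "\<lambda>(a, b). phi x1 [^]\<^bsub>M\<^esub> (a::nat) \<otimes>\<^bsub>M\<^esub> phi x2 [^]\<^bsub>M\<^esub> (b::nat)"
  assume "phi x1 [^]\<^bsub>M\<^esub> x \<otimes>\<^bsub>M\<^esub> phi x2 [^]\<^bsub>M\<^esub> i = \<one>\<^bsub>M\<^esub>"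
  then have "?F (nat (x mod int p), nat (i mod int p)) = ?F (0, 0)"
    using M_int_pow_mod_p[of "phi x1" x] M_int_pow_mod_p[of "phi x2" i] x1 x2 by simp
  moreover have "(nat (x mod int p), nat (i mod int p)) \<in> {..<p} \<times> {..<p}" "(0, 0) \<in> {..<p} \<times> {..<p}"
    using p_gt_1 by (simp_all add: nat_less_iff)
  ultimately have "nat (x mod int p) = 0" "nat (i mod int p) = 0"
    using inj_onD[OF lift_images_products_inj] by blast+
  moreover have "0 \<le> x mod int p" "0 \<le> i mod int p" using p_gt_1 by simp_all
  ultimately have "x mod int p = 0" "i mod int p = 0" by simp_all
  then show "int p dvd x \<and> int p dvd i" by (simp add: dvd_eq_mod_eq_0)
qed

lemma lifts_nontrivial: "phi x1 \<noteq> \<one>\<^bsub>M\<^esub>" "phi x2 \<noteq> \<one>\<^bsub>M\<^esub>"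
proof -
  have "\<not> int p dvd 1" using p_gt_1 by simp
  moreover have "phi x1 [^]\<^bsub>M\<^esub> (1::int) \<otimes>\<^bsub>M\<^esub> phi x2 [^]\<^bsub>M\<^esub> (0::int) = phi x1"
    and "phi x1 [^]\<^bsub>M\<^esub> (0::int) \<otimes>\<^bsub>M\<^esub> phi x2 [^]\<^bsub>M\<^esub> (1::int) = phi x2"
    using x1 x2 by simp_all
  ultimately show "phi x1 \<noteq> \<one>\<^bsub>M\<^esub>" and "phi x2 \<noteq> \<one>\<^bsub>M\<^esub>"
    using indep_lifts unfolding indep_mod_p_def by (metis dvd_0_right)+
qed

lemma commutator_kernel: "commutator \<in> K"
  unfolding commutator_def by (rule commutator_in_kernel[OF x1 x2])

lemma commutator_carrier: "commutator \<in> carrier G"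
  using commutator_kernel kernel_iff by blast

lemma commutator_generate: "commutator \<in> generate G {x1, x2}"
proof -
  have "x1 \<in> generate G {x1, x2}" "x2 \<in> generate G {x1, x2}" by (auto intro: generate.incl)
  then show ?thesis
    using x1 x2 G.generate_is_subgroup[of "{x1, x2}"]
    by (simp add: commutator_def subgroup.m_closed subgroup.m_inv_closed)
qed

lemma x1_x2_swap: "x1 \<otimes> x2 = x2 \<otimes> x1 \<otimes> commutator"
  unfolding commutator_def by (rule mult_commutator_swap[OF x1 x2])

lemma commuting_order_p_iso:
  assumes "x1 [^] p = \<one>" "x2 [^] p = \<one>" "commutator = \<one>"
  shows "G\<lparr>carrier := generate G {x1, x2}\<rparr> \<cong> Zmod p \<times>\<times> Zmod p"
proof (rule G.generate_pair_iso_metacyclic[OF x1 x2, where r = 1 and t = 0])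
  show "1 < int p" using p_gt_1 by simp
  then show "1 < int p" .
  show "x1 [^] (int p) = \<one>" "x2 [^] (int p) = x1 [^] (0::int)"
    using assms by (simp_all add: int_pow_int)
  have "x2 \<otimes> x1 \<otimes> inv x2 = x1 \<otimes> x2 \<otimes> inv x2"
    using x1_x2_swap assms x1 x2 by simp
  then show "x2 \<otimes> x1 \<otimes> inv x2 = x1 [^] (1::int)"
    using x1 x2 by (simp add: G.m_assoc)
  show "carrier (Zmod p \<times>\<times> Zmod p) = {0..<int p} \<times> {0..<int p}"
    using p_gt_1 by (simp add: DirProd_def carrier_integer_mod_group)
  show "(x, i) \<otimes>\<^bsub>Zmod p \<times>\<times> Zmod p\<^esub> (u, j) =
      ((x + 1 ^ nat i * u + 0 * ((i + j) div int p)) mod int p, (i + j) mod int p)" for x i u j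
    by (simp add: DirProd_def)
  show "inj_on (\<lambda>(x, i). x1 [^] x \<otimes> x2 [^] i) ({0..<int p} \<times> {0..<int p})"
    by (rule normal_form_inj[OF x1 x2 indep_lifts]) auto
qed

lemma D4_iso:
  assumes p2: "p = 2" and "x1 [^] p = \<one>" "x2 [^] p = \<one>" and nc: "commutator \<noteq> \<one>"
  shows "G\<lparr>carrier := generate G {x1, x2}\<rparr> \<cong> D4_grp"
proof -
  define y where "y = x1 \<otimes> x2"
  have y: "y \<in> carrier G" using x1 x2 by (simp add: y_def)
  have sq: "x1 \<otimes> x1 = \<one>" "x2 \<otimes> x2 = \<one>"
    using assms x1 x2 by (simp_all add: numeral_2_eq_2)
  then have inv_x: "inv x1 = x1" "inv x2 = x2"
    using x1 x2 G.inv_equality by blast+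
  \<comment> \<open>the rotation y = x1 x2 has order 4: its square is the commutator\<close>
  have "y [^] (2::nat) = commutator"
    using x1 x2 inv_x by (simp add: y_def commutator_def numeral_2_eq_2 G.m_assoc)
  then have y2: "y [^] (2::int) = commutator" by (simp add: int_pow_int[symmetric])
  have "generate G {y, x1} = generate G {x1, x2}"
    unfolding y_def by (rule G.generate_pair_mult_eq[OF x1 x2])
  moreover have "G\<lparr>carrier := generate G {y, x1}\<rparr> \<cong> D4_grp"
  proof (rule G.generate_pair_iso_metacyclic[OF y x1, where q = 4 and pp = 2 and r = "-1" and t = 0])
    have "y [^] (4::int) = (y [^] (2::int)) [^] (2::int)" using y by (simp add: G.int_pow_pow)
    then show "y [^] (4::int) = \<one>"
      using y2 kernel_pow_p[OF commutator_kernel] p2 by (simp add: int_pow_int[symmetric])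
    show "x1 [^] (2::int) = y [^] (0::int)" using assms p2 by (simp add: int_pow_int[symmetric])
    show "x1 \<otimes> y \<otimes> inv x1 = y [^] (-1::int)"
      using x1 x2 inv_x sq by (simp add: y_def G.int_pow_neg G.inv_mult_group G.m_assoc[symmetric])
    show "carrier D4_grp = {0..<4} \<times> {0..<2}" by (simp add: D4_grp_def)
    show "(x, i) \<otimes>\<^bsub>D4_grp\<^esub> (u, j) = ((x + (- 1) ^ nat i * u + 0 * ((i + j) div 2)) mod 4, (i + j) mod 2)"
      for x i u j by (simp add: D4_grp_def)
    have "indep_mod_p (phi x1) (phi x2 \<otimes>\<^bsub>M\<^esub> phi x1 [^]\<^bsub>M\<^esub> (1::nat))"
      using indep_mod_p_shear[OF _ _ indep_lifts, where s = 1] x1 x2 by simp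
    then have "indep_mod_p (phi x1) (phi x2 \<otimes>\<^bsub>M\<^esub> phi x1)" using x1 by simp
    then have "indep_mod_p (phi y) (phi x1)"
      using indep_mod_p_sym x1 x2 by (simp add: y_def M.m_comm)
    then have "inj_on (\<lambda>(x, i). y [^] x \<otimes> x1 [^] i) ({0..<(4::int)} \<times> {0..<int p})"
    proof (rule normal_form_inj[OF y x1])
      fix d :: int assume "int p dvd d" "y [^] d = \<one>"
      then obtain s where "d = 2 * s" "commutator [^] s = \<one>"
        using y y2 p2 by (auto elim!: dvdE simp: G.int_pow_pow[symmetric])
      then show "4 dvd d"
        using kernel_int_pow_eq_one_iff[OF commutator_kernel nc] p2 by auto
    qed
    then show "inj_on (\<lambda>(x, i). y [^] x \<otimes> x1 [^] i) ({0..<(4::int)} \<times> {0..<(2::int)})"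
      using p2 by simp
  qed simp_all
  ultimately show ?thesis by simp
qed

lemma heisenberg_normal_form_inj:
  assumes e: "e \<in> K" "e \<noteq> \<one>"
  shows "inj_on (\<lambda>(a, b, c). x1 [^] nat b \<otimes> x2 [^] nat a \<otimes> e [^] nat c)
    ({0..<int p} \<times> {0..<int p} \<times> {0..<int p})"
proof (rule inj_onI)
  fix U V
  assume U: "U \<in> {0..<int p} \<times> {0..<int p} \<times> {0..<int p}"
    and V: "V \<in> {0..<int p} \<times> {0..<int p} \<times> {0..<int p}"
    and eqUV: "(\<lambda>(a, b, c). x1 [^] nat b \<otimes> x2 [^] nat a \<otimes> e [^] nat c) U
      = (\<lambda>(a, b, c). x1 [^] nat b \<otimes> x2 [^] nat a \<otimes> e [^] nat c) V"
  obtain a b c a' b' c' where UV: "U = (a, b, c)" "V = (a', b', c')" by (cases U, cases V) auto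
  have range: "a \<in> {0..<int p}" "b \<in> {0..<int p}" "c \<in> {0..<int p}"
    "a' \<in> {0..<int p}" "b' \<in> {0..<int p}" "c' \<in> {0..<int p}"
    using U V by (simp_all add: UV)
  have eq: "x1 [^] nat b \<otimes> x2 [^] nat a \<otimes> e [^] nat c = x1 [^] nat b' \<otimes> x2 [^] nat a' \<otimes> e [^] nat c'"
    using eqUV by (simp add: UV)
  have ec: "e \<in> carrier G" using e kernel_iff by blast
  have ph: "phi (x1 [^] nat b \<otimes> x2 [^] nat a \<otimes> e [^] nat c) = phi x1 [^]\<^bsub>M\<^esub> b \<otimes>\<^bsub>M\<^esub> phi x2 [^]\<^bsub>M\<^esub> a"
    if "0 \<le> a" "0 \<le> b" for a b c :: int
    using that x1 x2 ec e by (simp add: phi.hom_nat_pow phi.hom_int_pow kernel_iff int_pow_of_nonneg)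
  have "phi x1 [^]\<^bsub>M\<^esub> b \<otimes>\<^bsub>M\<^esub> phi x2 [^]\<^bsub>M\<^esub> a = phi x1 [^]\<^bsub>M\<^esub> b' \<otimes>\<^bsub>M\<^esub> phi x2 [^]\<^bsub>M\<^esub> a'"
    using ph[of a b c] ph[of a' b' c'] eq range by simp
  then have "int p dvd a - a'" "int p dvd b - b'"
    using indep_mod_p_eqD[OF _ _ indep_lifts] x1 x2 by simp_all
  then have a: "a = a'" and b: "b = b'"
    using int_mod_eqI[OF range(1,4)] int_mod_eqI[OF range(2,5)] by simp_all
  then have "e [^] nat c = e [^] nat c'"
    using eq x1 x2 ec by (simp add: G.m_assoc)
  then have "e [^] (c - c') = \<one>"
    using ec range by (simp add: int_pow_of_nonneg G.int_pow_diff)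
  then have "c = c'"
    using kernel_int_pow_eq_one_iff[OF e] int_mod_eqI[OF range(3,6)] by simp
  then show "U = V" using a b by (simp add: UV)
qed

lemma heisenberg_iso:
  assumes "x1 [^] p = \<one>" "x2 [^] p = \<one>" and nc: "commutator \<noteq> \<one>"
  shows "G\<lparr>carrier := generate G {x1, x2}\<rparr> \<cong> Heis_grp p"
    and "generate G {commutator} = generate G {x1, x2} \<inter> K"
proof -
  define e where "e = inv commutator"
  have eK: "e \<in> K" "e \<noteq> \<one>"
    using commutator_kernel phi.subgroup_kernel nc commutator_carrier
    by (auto simp: e_def subgroup.m_inv_closed)
  then have ec: "e \<in> carrier G" using kernel_iff by blast
  show "G\<lparr>carrier := generate G {x1, x2}\<rparr> \<cong> Heis_grp p"
  proof (rule G.generate_pair_iso_heisenberg[OF x1 x2 ec _ _ _ _ _ _ _ _ _ _ heisenberg_normal_form_inj[OF eK]])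
    show "1 < int p" using p_gt_1 by simp
    show "x1 [^] int p = \<one>" "x2 [^] int p = \<one>" "e [^] int p = \<one>"
      using assms kernel_pow_p[OF eK(1)] by (simp_all add: int_pow_int)
    show "x2 \<otimes> x1 = x1 \<otimes> x2 \<otimes> e"
      using x1_x2_swap x1 x2 commutator_carrier by (simp add: e_def G.m_assoc)
    show "e \<otimes> x1 = x1 \<otimes> e" "e \<otimes> x2 = x2 \<otimes> e"
      using kernel_central[OF eK(1)] x1 x2 by simp_all
    show "e \<in> generate G {x1, x2}"
      using commutator_generate x1 x2 G.generate_is_subgroup[of "{x1, x2}"]
      by (simp add: e_def subgroup.m_inv_closed)
  qed (simp_all add: Heis_grp_def)
  have "generate G {commutator} \<subseteq> generate G {x1, x2}"
    using commutator_generate x1 x2 by (intro G.generate_subgroup_incl G.generate_is_subgroup) auto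
  then show "generate G {commutator} = generate G {x1, x2} \<inter> K"
    using kernel_generate_eq[OF commutator_kernel nc] by blast
qed

lemma Q8_iso:
  assumes p2: "p = 2" and x1p: "x1 [^] p \<noteq> \<one>" and x2p: "x2 [^] p \<noteq> \<one>" and nc: "commutator \<noteq> \<one>"
  shows "G\<lparr>carrier := generate G {x1, x2}\<rparr> \<cong> Q8_grp"
proof -
  define a where "a = x1 [^] p"
  have aK: "a \<in> K" "a \<noteq> \<one>" using pow_p_in_kernel[OF x1] x1p by (simp_all add: a_def)
  have x2a: "x2 [^] p = a" and ca: "commutator = a"
    using kernel_unique_nontrivial[OF p2] pow_p_in_kernel[OF x2] x2p commutator_kernel nc aK by blast+
  have x1_sq: "x1 [^] (2::int) = a" using p2 by (simp add: a_def int_pow_int[symmetric])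
  show ?thesis
  proof (rule G.generate_pair_iso_metacyclic[OF x1 x2, where q = 4 and pp = 2 and r = "-1" and t = 2])
    show "x1 [^] (4::int) = \<one>"
      using x1 x1_sq kernel_pow_p[OF aK(1)] p2
      by (simp add: G.int_pow_pow[symmetric, of _ 2 2, simplified] int_pow_int[symmetric])
    show "x2 [^] (2::int) = x1 [^] (2::int)" using x2a x1_sq p2 by (simp add: int_pow_int[symmetric])
    have "x2 \<otimes> x1 \<otimes> inv x2 = inv commutator \<otimes> x1"
      using x1 x2 by (simp add: commutator_def G.inv_mult_group G.m_assoc)
    also have "\<dots> = inv x1"
    proof -
      have "x1 \<otimes> x1 = a" using x1 p2 by (simp add: a_def numeral_2_eq_2)
      then show ?thesis using x1 by (simp add: ca G.inv_mult_group G.m_assoc flip: \<open>x1 \<otimes> x1 = a\<close>)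
    qed
    finally show "x2 \<otimes> x1 \<otimes> inv x2 = x1 [^] (- 1::int)" using x1 by (simp add: G.int_pow_neg)
    show "carrier Q8_grp = {0..<4} \<times> {0..<2}" by (simp add: Q8_grp_def)
    show "(x, i) \<otimes>\<^bsub>Q8_grp\<^esub> (u, j) = ((x + (- 1) ^ nat i * u + 2 * ((i + j) div 2)) mod 4, (i + j) mod 2)"
      if "x \<in> {0..<4}" "i \<in> {0..<2}" "u \<in> {0..<4}" "j \<in> {0..<2}" for x i u j
    proof -
      have "i = 0 \<or> i = 1" "j = 0 \<or> j = 1" using that by auto
      then have "i * j = (i + j) div 2" by auto
      then show ?thesis by (simp add: Q8_grp_def mult.assoc)
    qed
    have "inj_on (\<lambda>(x, i). x1 [^] x \<otimes> x2 [^] i) ({0..<(4::int)} \<times> {0..<int p})"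
    proof (rule normal_form_inj[OF x1 x2 indep_lifts])
      fix d :: int assume "int p dvd d" "x1 [^] d = \<one>"
      then obtain s where "d = 2 * s" "a [^] s = \<one>"
        using x1 x1_sq p2 by (auto elim!: dvdE simp: G.int_pow_pow[symmetric])
      then show "4 dvd d" using kernel_int_pow_eq_one_iff[OF aK] p2 by auto
    qed
    then show "inj_on (\<lambda>(x, i). x1 [^] x \<otimes> x2 [^] i) ({0..<(4::int)} \<times> {0..<(2::int)})"
      using p2 by simp
  qed simp_all
qed

text \<open>The shear z = x2 x1^s, with x1^(sp) = x2^(-p), has order p whenever the correction term
  commutator^(s p (p-1)/2) of the product formula vanishes.\<close>

lemma shear_pow_p:
  assumes x1p: "x1 [^] p \<noteq> \<one>" and h: "commutator = \<one> \<or> p \<noteq> 2"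
  obtains s :: nat where "(x2 \<otimes> x1 [^] s) [^] p = \<one>"
proof -
  define a where "a = x1 [^] p"
  have aK: "a \<in> K" "a \<noteq> \<one>" using pow_p_in_kernel[OF x1] x1p by (simp_all add: a_def)
  have "inv (x2 [^] p) \<in> K"
    using pow_p_in_kernel[OF x2] phi.subgroup_kernel by (simp add: subgroup.m_inv_closed)
  then obtain w :: int where w: "inv (x2 [^] p) = a [^] w" using kernel_eq_int_pow[OF aK] by blast
  define s where "s = nat (w mod int p)"
  have "a [^] s = a [^] (w mod int p)"
    using p_gt_1 by (simp add: s_def int_pow_of_nonneg)
  also have "\<dots> = inv (x2 [^] p)"
    using G.int_pow_mod_eq[of a "int p" w] kernel_pow_p[OF aK(1)] aK(1) w kernel_iff
    by (simp add: int_pow_int)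
  finally have as: "(x1 [^] s) [^] p = inv (x2 [^] p)"
    using x1 by (simp add: a_def G.nat_pow_pow mult.commute)
  let ?c = "commutator [^] s"
  have c1: "commutator \<otimes> x1 = x1 \<otimes> commutator" and c2: "commutator \<otimes> x2 = x2 \<otimes> commutator"
    using kernel_central[OF commutator_kernel] x1 x2 by simp_all
  have c: "?c \<in> carrier G" "?c \<otimes> x2 = x2 \<otimes> ?c" "?c \<otimes> x1 [^] s = x1 [^] s \<otimes> ?c"
    using G.group_commutes_pow[OF c2 commutator_carrier x2] G.nat_pow_commute[OF c1 commutator_carrier x1]
      commutator_carrier by simp_all
  have swap: "x1 [^] s \<otimes> x2 = x2 \<otimes> x1 [^] s \<otimes> ?c"
    using G.central_commutator_pow[OF x2 x1 commutator_carrier x1_x2_swap c2 c1, of s 1] x2 by simp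
  have "?c [^] (p * (p - 1) div 2) = \<one>"
  proof (cases "commutator = \<one>")
    case False
    then have "odd p" using h prime_p p_gt_1 prime_odd_nat by fastforce
    then have "p * (p - 1) div 2 = p * ((p - 1) div 2)" by (simp add: div_mult_swap)
    moreover have "?c [^] (p * k) = (commutator [^] p) [^] (s * k)" for k
      using commutator_carrier by (simp add: G.nat_pow_pow mult.commute mult.left_commute)
    ultimately show ?thesis using kernel_pow_p[OF commutator_kernel] by simp
  qed simp
  then have "(x2 \<otimes> x1 [^] s) [^] p = \<one>"
    using G.central_commutator_prod_pow[OF x2 _ c(1) swap c(2) c(3)] as x1 x2 by simp
  then show thesis by (rule that)
qed

lemma order_p2_iso_Zmod_or_U:
  assumes x1p: "x1 [^] p \<noteq> \<one>" and h: "commutator = \<one> \<or> p \<noteq> 2"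
  shows "(commutator = \<one> \<longrightarrow> G\<lparr>carrier := generate G {x1, x2}\<rparr> \<cong> Zmod (p ^ 2) \<times>\<times> Zmod p)
    \<and> (G\<lparr>carrier := generate G {x1, x2}\<rparr> \<cong> Zmod (p ^ 2) \<times>\<times> Zmod p
       \<or> (\<exists>a. coprime a (int p) \<and> G\<lparr>carrier := generate G {x1, x2}\<rparr> \<cong> U_grp p a))"
proof -
  obtain s :: nat where zp: "(x2 \<otimes> x1 [^] s) [^] p = \<one>" using shear_pow_p[OF assms] .
  define z where "z = x2 \<otimes> x1 [^] s"
  have z: "z \<in> carrier G" using x1 x2 by (simp add: z_def)
  have "generate G {x1, z} = generate G {x1, x2}"
    unfolding z_def by (rule G.generate_pair_shear_eq[OF x1 x2])
  moreover have "indep_mod_p (phi x1) (phi z)"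
    using indep_mod_p_shear[OF _ _ indep_lifts] x1 x2 by (simp add: z_def phi.hom_nat_pow)
  moreover have "z \<otimes> x1 = x1 \<otimes> z" if "commutator = \<one>"
  proof -
    have "z \<otimes> x1 = x2 \<otimes> (x1 [^] s \<otimes> x1)" using x1 x2 by (simp add: z_def G.m_assoc)
    also have "\<dots> = (x2 \<otimes> x1) \<otimes> x1 [^] s"
      using x1 x2 by (simp add: G.nat_pow_Suc2[symmetric] G.m_assoc del: G.nat_pow_Suc)
    also have "\<dots> = x1 \<otimes> z"
      using that x1_x2_swap x1 x2 by (simp add: z_def G.m_assoc[symmetric])
    finally show ?thesis .
  qed
  ultimately show ?thesis
    using lifts_iso_Zmod_or_U[OF x1 z x1p zp[folded z_def]] by simp
qed

lemma both_order_p_iso: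
  assumes "x1 [^] p = \<one>" "x2 [^] p = \<one>"
  shows "(if p = 2 then
         G\<lparr>carrier := generate G {x1, x2}\<rparr> \<cong> Zmod 2 \<times>\<times> Zmod 2
       \<or> G\<lparr>carrier := generate G {x1, x2}\<rparr> \<cong> D4_grp
       else
         G\<lparr>carrier := generate G {x1, x2}\<rparr> \<cong> Zmod p \<times>\<times> Zmod p
       \<or> (\<exists>a. coprime a (int p) \<and> G\<lparr>carrier := generate G {x1, x2}\<rparr> \<cong> U_grp p a)
       \<or> (G\<lparr>carrier := generate G {x1, x2}\<rparr> \<cong> Heis_grp p
          \<and> generate G {x1 \<otimes> x2 \<otimes> inv x1 \<otimes> inv x2} = generate G {x1, x2} \<inter> K))"
  using commuting_order_p_iso[OF assms] D4_iso[OF _ assms] heisenberg_iso[OF assms]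
  by (cases "commutator = \<one>") (auto simp: commutator_def)

lemma both_order_p2_iso:
  assumes "x1 [^] p \<noteq> \<one>" "x2 [^] p \<noteq> \<one>"
  shows "(if p = 2 then
         G\<lparr>carrier := generate G {x1, x2}\<rparr> \<cong> Zmod 4 \<times>\<times> Zmod 2
       \<or> G\<lparr>carrier := generate G {x1, x2}\<rparr> \<cong> Q8_grp
       else
         G\<lparr>carrier := generate G {x1, x2}\<rparr> \<cong> Zmod (p ^ 2) \<times>\<times> Zmod p
       \<or> (\<exists>a. coprime a (int p) \<and> G\<lparr>carrier := generate G {x1, x2}\<rparr> \<cong> U_grp p a))"
  using order_p2_iso_Zmod_or_U[OF assms(1)] Q8_iso[OF _ assms]
  by (cases "commutator = \<one>") auto

lemma mixed_orders_iso:
  assumes "x1 [^] p = \<one>" "x2 [^] p \<noteq> \<one>"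
  shows "G\<lparr>carrier := generate G {x1, x2}\<rparr> \<cong> Zmod (p ^ 2) \<times>\<times> Zmod p
       \<or> (\<exists>a. coprime a (int p) \<and> G\<lparr>carrier := generate G {x1, x2}\<rparr> \<cong> U_grp p a)"
  using lifts_iso_Zmod_or_U[OF x2 x1 assms(2,1) indep_mod_p_sym[OF _ _ indep_lifts]] x1 x2
  by (simp add: insert_commute)

end

theorem lemma4p2:
  fixes p :: nat
    and Mh :: "('a,'c) monoid_scheme" and M :: "('b,'d) monoid_scheme"
    and phi :: "'a \<Rightarrow> 'b"
    and m1 m2 :: 'b and x1 x2 :: 'a
  assumes "Factorial_Ring.prime p"
    and "group Mh" and "comm_group M" and "finite (carrier M)"
    and "\<forall>m \<in> carrier M. m [^]\<^bsub>M\<^esub> p = \<one>\<^bsub>M\<^esub>"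
    and "phi \<in> hom Mh M" and "phi ` carrier Mh = carrier M"
    and "card (kernel Mh M phi) = p"
    and "frattini_ext Mh M phi"
    and "m1 \<in> carrier M" and "m2 \<in> carrier M"
    and "card (generate M {m1, m2}) = p ^ 2"
    and "x1 \<in> carrier Mh" and "x2 \<in> carrier Mh" and "phi x1 = m1" and "phi x2 = m2"
  shows
   "(m1 \<in> V_set p Mh M phi \<and> m2 \<in> V_set p Mh M phi \<longrightarrow>
      (if p = 2 then
         Mh\<lparr>carrier := generate Mh {x1, x2}\<rparr> \<cong> Zmod 2 \<times>\<times> Zmod 2
       \<or> Mh\<lparr>carrier := generate Mh {x1, x2}\<rparr> \<cong> D4_grp
       else
         Mh\<lparr>carrier := generate Mh {x1, x2}\<rparr> \<cong> Zmod p \<times>\<times> Zmod p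
       \<or> (\<exists>a. coprime a (int p) \<and> Mh\<lparr>carrier := generate Mh {x1, x2}\<rparr> \<cong> U_grp p a)
       \<or> (Mh\<lparr>carrier := generate Mh {x1, x2}\<rparr> \<cong> Heis_grp p
          \<and> generate Mh {x1 \<otimes>\<^bsub>Mh\<^esub> x2 \<otimes>\<^bsub>Mh\<^esub> inv\<^bsub>Mh\<^esub> x1 \<otimes>\<^bsub>Mh\<^esub> inv\<^bsub>Mh\<^esub> x2}
              = generate Mh {x1, x2} \<inter> kernel Mh M phi)))
  \<and> (m1 \<in> carrier M - V_set p Mh M phi \<and> m2 \<in> carrier M - V_set p Mh M phi \<longrightarrow>
      (if p = 2 then
         Mh\<lparr>carrier := generate Mh {x1, x2}\<rparr> \<cong> Zmod 4 \<times>\<times> Zmod 2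
       \<or> Mh\<lparr>carrier := generate Mh {x1, x2}\<rparr> \<cong> Q8_grp
       else
         Mh\<lparr>carrier := generate Mh {x1, x2}\<rparr> \<cong> Zmod (p ^ 2) \<times>\<times> Zmod p
       \<or> (\<exists>a. coprime a (int p) \<and> Mh\<lparr>carrier := generate Mh {x1, x2}\<rparr> \<cong> U_grp p a)))
  \<and> (m1 \<in> V0_set p Mh M phi \<and> m2 \<in> carrier M - V_set p Mh M phi \<longrightarrow>
         Mh\<lparr>carrier := generate Mh {x1, x2}\<rparr> \<cong> Zmod (p ^ 2) \<times>\<times> Zmod p
       \<or> (\<exists>a. coprime a (int p) \<and> Mh\<lparr>carrier := generate Mh {x1, x2}\<rparr> \<cong> U_grp p a))"
proof -
  interpret lifted_pair Mh M phi p x1 x2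
    using assms
    by (intro lifted_pair.intro elementary_abelian_extension.intro lifted_pair_axioms.intro
        elementary_abelian_extension_axioms.intro) auto
  have V0: "m1 \<in> V0_set p Mh M phi \<longleftrightarrow> x1 [^]\<^bsub>Mh\<^esub> p = \<one>\<^bsub>Mh\<^esub>"
    and V1: "m1 \<in> V_set p Mh M phi \<longleftrightarrow> x1 [^]\<^bsub>Mh\<^esub> p = \<one>\<^bsub>Mh\<^esub>"
    and V2: "m2 \<in> V_set p Mh M phi \<longleftrightarrow> x2 [^]\<^bsub>Mh\<^esub> p = \<one>\<^bsub>Mh\<^esub>"
    using V0_set_iff V_set_iff lifts_nontrivial x1 x2 assms by blast+
  show ?thesis
    using both_order_p_iso both_order_p2_iso mixed_orders_iso assms by (simp add: V0 V1 V2)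
qed

end
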